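(* Let $(S_{11},S_{12},P_1)$ on $\mathcal H_1$ and $(S_{21},S_{22},P_2)$ on $\mathcal H_2$ be $\Gamma_3$-contractions with fundamental operator pairs $(F_1,F_2)$ and $(G_1,G_2)$ respectively. If there is a unitary $U:\mathcal H_1\to\mathcal H_2$ with $US_{11}=S_{21}U$, $US_{12}=S_{22}U$, $UP_1=P_2U$, then there is a unitary $V:\mathcal D_{P_1}\to\mathcal D_{P_2}$ with $VF_1V^*=G_1$ and $VF_2V^*=G_2$.
   Context: $\Gamma_3=\{(z_1+z_2+z_3,\,z_1z_2+z_2z_3+z_3z_1,\,z_1z_2z_3):|z_i|\le1\}$. A $\Gamma_3$-contraction is a commuting triple with Taylor joint spectrum in $\Gamma_3$ and $\|f(S_1,S_2,P)\|\le\sup_{\Gamma_3}|f|$ for rational $f$ with poles off $\Gamma_3$. $D_P=(I-P^*P)^{1/2}$, $\mathcal D_P=\overline{\operatorname{Ran}}D_P$. The fundamental operator pair of a $\Gamma_3$-contraction $(S_1,S_2,P)$ is the unique pair $F_1,F_2\in\mathcal B(\mathcal D_P)$ with $S_1-S_2^*P=D_PF_1D_P$ and $S_2-S_1^*P=D_PF_2D_P$. *)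

theory Defs
  imports "HOL-Analysis.Analysis"
begin

text \<open>A complex Hilbert space: a real Hilbert space (the real inner product being the
real part of the complex one) together with a compatible complex scalar multiplication.
The complex inner product is recovered by polarization; adjoints, unitaries and
orthogonality computed with respect to the real part coincide with the complex ones.\<close>

class complex_hilbert = real_inner + complete_space +
  fixes scaleC :: "complex \<Rightarrow> 'a \<Rightarrow> 'a"
  assumes scaleC_add_right: "scaleC c (x + y) = scaleC c x + scaleC c y"
    and scaleC_add_left: "scaleC (c + d) x = scaleC c x + scaleC d x"
    and scaleC_scaleC: "scaleC c (scaleC d x) = scaleC (c * d) x"
    and scaleC_one: "scaleC 1 x = x"
    and scaleC_of_real: "scaleC (complex_of_real r) x = scaleR r x"
    and norm_scaleC: "norm (scaleC c x) = cmod c * norm x"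

definition bounded_clinear_op :: "('a::complex_hilbert \<Rightarrow> 'b::complex_hilbert) \<Rightarrow> bool" where
  "bounded_clinear_op T \<longleftrightarrow> bounded_linear T \<and> (\<forall>c x. T (scaleC c x) = scaleC c (T x))"

definition bounded_clinear_on :: "'a::complex_hilbert set \<Rightarrow> ('a \<Rightarrow> 'b::complex_hilbert) \<Rightarrow> bool" where
  "bounded_clinear_on S T \<longleftrightarrow>
     (\<forall>x\<in>S. \<forall>y\<in>S. T (x + y) = T x + T y) \<and>
     (\<forall>c. \<forall>x\<in>S. T (scaleC c x) = scaleC c (T x)) \<and>
     (\<exists>K. \<forall>x\<in>S. norm (T x) \<le> K * norm x)"

definition adj :: "('a::complex_hilbert \<Rightarrow> 'a) \<Rightarrow> ('a \<Rightarrow> 'a)" where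
  "adj T = (THE T'. \<forall>x y. inner (T x) y = inner x (T' y))"

definition positive_op :: "('a::complex_hilbert \<Rightarrow> 'a) \<Rightarrow> bool" where
  "positive_op B \<longleftrightarrow> bounded_clinear_op B \<and> adj B = B \<and> (\<forall>x. 0 \<le> inner (B x) x)"

definition op_sqrt :: "('a::complex_hilbert \<Rightarrow> 'a) \<Rightarrow> ('a \<Rightarrow> 'a)" where
  "op_sqrt A = (THE B. positive_op B \<and> B \<circ> B = A)"

definition defect_op :: "('a::complex_hilbert \<Rightarrow> 'a) \<Rightarrow> ('a \<Rightarrow> 'a)" where
  "defect_op P = op_sqrt (\<lambda>x. x - adj P (P x))"

definition defect_space :: "('a::complex_hilbert \<Rightarrow> 'a) \<Rightarrow> 'a set" where
  "defect_space P = closure (range (defect_op P))"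

definition unitary_op :: "('a::complex_hilbert \<Rightarrow> 'b::complex_hilbert) \<Rightarrow> bool" where
  "unitary_op U \<longleftrightarrow> bounded_clinear_op U \<and> bij U \<and> (\<forall>x. norm (U x) = norm x)"

definition unitary_between :: "'a::complex_hilbert set \<Rightarrow> 'b::complex_hilbert set \<Rightarrow> ('a \<Rightarrow> 'b) \<Rightarrow> bool" where
  "unitary_between S T V \<longleftrightarrow> bounded_clinear_on S V \<and> bij_betw V S T \<and> (\<forall>x\<in>S. norm (V x) = norm x)"

definition Gamma3 :: "(complex \<times> complex \<times> complex) set" where
  "Gamma3 = {(z1 + z2 + z3, z1 * z2 + z2 * z3 + z3 * z1, z1 * z2 * z3) | z1 z2 z3.
              cmod z1 \<le> 1 \<and> cmod z2 \<le> 1 \<and> cmod z3 \<le> 1}"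

definition commuting_triple :: "('a::complex_hilbert \<Rightarrow> 'a) \<Rightarrow> ('a \<Rightarrow> 'a) \<Rightarrow> ('a \<Rightarrow> 'a) \<Rightarrow> bool" where
  "commuting_triple A B C \<longleftrightarrow> bounded_clinear_op A \<and> bounded_clinear_op B \<and> bounded_clinear_op C \<and>
     A \<circ> B = B \<circ> A \<and> B \<circ> C = C \<circ> B \<and> A \<circ> C = C \<circ> A"

text \<open>Koszul complex \<open>0 \<rightarrow> H \<rightarrow> H^3 \<rightarrow> H^3 \<rightarrow> H \<rightarrow> 0\<close> of a commuting triple.\<close>
definition koszul_d1 :: "('a::complex_hilbert \<Rightarrow> 'a) \<Rightarrow> ('a \<Rightarrow> 'a) \<Rightarrow> ('a \<Rightarrow> 'a) \<Rightarrow> 'a \<Rightarrow> 'a \<times> 'a \<times> 'a" where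
  "koszul_d1 A1 A2 A3 x = (A1 x, A2 x, A3 x)"

definition koszul_d2 :: "('a::complex_hilbert \<Rightarrow> 'a) \<Rightarrow> ('a \<Rightarrow> 'a) \<Rightarrow> ('a \<Rightarrow> 'a) \<Rightarrow> 'a \<times> 'a \<times> 'a \<Rightarrow> 'a \<times> 'a \<times> 'a" where
  "koszul_d2 A1 A2 A3 v = (case v of (x1, x2, x3) \<Rightarrow>
      (A2 x3 - A3 x2, A3 x1 - A1 x3, A1 x2 - A2 x1))"

definition koszul_d3 :: "('a::complex_hilbert \<Rightarrow> 'a) \<Rightarrow> ('a \<Rightarrow> 'a) \<Rightarrow> ('a \<Rightarrow> 'a) \<Rightarrow> 'a \<times> 'a \<times> 'a \<Rightarrow> 'a" where
  "koszul_d3 A1 A2 A3 v = (case v of (y1, y2, y3) \<Rightarrow> A1 y1 + A2 y2 + A3 y3)"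

definition koszul_exact :: "('a::complex_hilbert \<Rightarrow> 'a) \<Rightarrow> ('a \<Rightarrow> 'a) \<Rightarrow> ('a \<Rightarrow> 'a) \<Rightarrow> bool" where
  "koszul_exact A1 A2 A3 \<longleftrightarrow>
     (\<forall>x. koszul_d1 A1 A2 A3 x = 0 \<longrightarrow> x = 0) \<and>
     (\<forall>v. koszul_d2 A1 A2 A3 v = 0 \<longrightarrow> v \<in> range (koszul_d1 A1 A2 A3)) \<and>
     (\<forall>v. koszul_d3 A1 A2 A3 v = 0 \<longrightarrow> v \<in> range (koszul_d2 A1 A2 A3)) \<and>
     surj (koszul_d3 A1 A2 A3)"

definition shift_op :: "('a::complex_hilbert \<Rightarrow> 'a) \<Rightarrow> complex \<Rightarrow> ('a \<Rightarrow> 'a)" where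
  "shift_op T c = (\<lambda>x. T x - scaleC c x)"

definition taylor_spectrum ::
  "('a::complex_hilbert \<Rightarrow> 'a) \<Rightarrow> ('a \<Rightarrow> 'a) \<Rightarrow> ('a \<Rightarrow> 'a) \<Rightarrow> (complex \<times> complex \<times> complex) set" where
  "taylor_spectrum A B C = {(a, b, c). \<not> koszul_exact (shift_op A a) (shift_op B b) (shift_op C c)}"

definition poly3_eval :: "nat \<Rightarrow> (nat \<Rightarrow> nat \<Rightarrow> nat \<Rightarrow> complex) \<Rightarrow> complex \<times> complex \<times> complex \<Rightarrow> complex" where
  "poly3_eval N cf z = (case z of (z1, z2, z3) \<Rightarrow>
     (\<Sum>i<N. \<Sum>j<N. \<Sum>k<N. cf i j k * z1 ^ i * z2 ^ j * z3 ^ k))"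

definition poly3_op :: "nat \<Rightarrow> (nat \<Rightarrow> nat \<Rightarrow> nat \<Rightarrow> complex) \<Rightarrow>
    ('a::complex_hilbert \<Rightarrow> 'a) \<Rightarrow> ('a \<Rightarrow> 'a) \<Rightarrow> ('a \<Rightarrow> 'a) \<Rightarrow> ('a \<Rightarrow> 'a)" where
  "poly3_op N cf A B C = (\<lambda>x.
     (\<Sum>i<N. \<Sum>j<N. \<Sum>k<N. scaleC (cf i j k) ((A ^^ i) ((B ^^ j) ((C ^^ k) x)))))"

text \<open>\<open>\<Gamma>_3\<close>-contraction: commuting triple, Taylor spectrum in \<open>\<Gamma>_3\<close>, and for every rational
function \<open>f = p/q\<close> with \<open>q\<close> zero-free on \<open>\<Gamma>_3\<close>, the operator \<open>f(A,B,C) = p(A,B,C) q(A,B,C)^{-1}\<close>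
is defined and has norm at most \<open>sup_{\<Gamma>_3} |f|\<close>.\<close>
definition gamma3_contraction :: "('a::complex_hilbert \<Rightarrow> 'a) \<Rightarrow> ('a \<Rightarrow> 'a) \<Rightarrow> ('a \<Rightarrow> 'a) \<Rightarrow> bool" where
  "gamma3_contraction A B C \<longleftrightarrow>
     commuting_triple A B C \<and> taylor_spectrum A B C \<subseteq> Gamma3 \<and>
     (\<forall>Np cp Nq cq. (\<forall>z\<in>Gamma3. poly3_eval Nq cq z \<noteq> 0) \<longrightarrow>
        (\<exists>R. bounded_clinear_op R \<and>
             R \<circ> poly3_op Nq cq A B C = id \<and> poly3_op Nq cq A B C \<circ> R = id \<and>
             (\<forall>x. norm (poly3_op Np cp A B C (R x)) \<le>
                  Sup ((\<lambda>z. cmod (poly3_eval Np cp z / poly3_eval Nq cq z)) ` Gamma3) * norm x)))"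

text \<open>Operators on \<open>\<D>_P\<close> are represented by maps on the whole space whose
behaviour is only constrained on \<open>\<D>_P\<close>.\<close>
definition fundamental_pair :: "('a::complex_hilbert \<Rightarrow> 'a) \<Rightarrow> ('a \<Rightarrow> 'a) \<Rightarrow> ('a \<Rightarrow> 'a) \<Rightarrow>
    ('a \<Rightarrow> 'a) \<Rightarrow> ('a \<Rightarrow> 'a) \<Rightarrow> bool" where
  "fundamental_pair S1 S2 P F1 F2 \<longleftrightarrow>
     F1 ` defect_space P \<subseteq> defect_space P \<and> F2 ` defect_space P \<subseteq> defect_space P \<and>
     bounded_clinear_on (defect_space P) F1 \<and> bounded_clinear_on (defect_space P) F2 \<and>
     (\<forall>x. S1 x - adj S2 (P x) = defect_op P (F1 (defect_op P x))) \<and>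
     (\<forall>x. S2 x - adj S1 (P x) = defect_op P (F2 (defect_op P x)))"

end

theory Submission
  imports Defs
begin

text \<open>The unitary \<open>U\<close> itself is the required \<open>V\<close>. Since \<open>U\<close> intertwines \<open>P\<^sub>1\<close> and \<open>P\<^sub>2\<close>,
  \<open>U D\<^bsub>P\<^sub>1\<^esub> U\<^sup>*\<close> is a positive square root of \<open>I - P\<^sub>2\<^sup>* P\<^sub>2\<close>, hence equals \<open>D\<^bsub>P\<^sub>2\<^esub>\<close> by
  uniqueness of positive square roots, and \<open>U\<close> maps \<open>\<D>\<^bsub>P\<^sub>1\<^esub>\<close> onto \<open>\<D>\<^bsub>P\<^sub>2\<^esub>\<close>. Conjugating the
  fundamental equations by \<open>U\<close> shows that \<open>U F\<^sub>i U\<^sup>*\<close> and \<open>G\<^sub>i\<close> have the same sandwich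
  \<open>D\<^bsub>P\<^sub>2\<^esub> (-) D\<^bsub>P\<^sub>2\<^esub>\<close>, and an operator on the defect space is determined by its sandwich.
  The positive square root exists because \<open>\<parallel>P\<parallel> \<le> 1\<close> for a \<open>\<Gamma>\<^sub>3\<close>-contraction, so the power
  series of \<open>1 - \<surd>(1 - t)\<close> converges at \<open>t = P\<^sup>* P\<close>.\<close>

section \<open>Real Hilbert spaces\<close>

lemma linear_coeff_eq_0_if_quadratic_nonneg:
  fixes a b :: real
  assumes "\<And>t. 0 \<le> 2 * t * a + t\<^sup>2 * b"
  shows "a = 0"
proof (rule ccontr)
  assume "a \<noteq> 0"
  define k where "k = \<bar>b\<bar> + 1"
  define t where "t = - a / k"
  have k: "k > 0" by (simp add: k_def)
  have "t\<^sup>2 * b \<le> t\<^sup>2 * k" by (intro mult_left_mono) (auto simp: k_def)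
  moreover have "2 * t * a + t\<^sup>2 * k = - (a\<^sup>2) / k"
    using k unfolding t_def by (simp add: field_simps power2_eq_square)
  moreover have "- (a\<^sup>2) / k < 0" using \<open>a \<noteq> 0\<close> k by (simp add: divide_neg_pos)
  ultimately show False using assms[of t] by linarith
qed

lemma Cauchy_if_norm_almost_minimal:
  fixes X :: "nat \<Rightarrow> 'a::real_inner"
  assumes mid: "\<And>m n. d \<le> (norm ((X m + X n) /\<^sub>R 2))\<^sup>2"
    and almost_min: "\<And>n. (norm (X n))\<^sup>2 < d + 1 / (real n + 1)"
  shows "Cauchy X"
proof (rule metric_CauchyI)
  have dist_bound: "(norm (X m - X n))\<^sup>2 \<le> 2 / (real m + 1) + 2 / (real n + 1)" for m n
  proof -
    have "(norm ((X m + X n) /\<^sub>R 2))\<^sup>2 = (norm (X m + X n))\<^sup>2 / 4"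
      by (simp add: power2_eq_square)
    then have "4 * d \<le> (norm (X m + X n))\<^sup>2" using mid[of m n] by simp
    moreover have "(norm (X m - X n))\<^sup>2 + (norm (X m + X n))\<^sup>2 = 2 * (norm (X m))\<^sup>2 + 2 * (norm (X n))\<^sup>2"
      by (simp add: power2_norm_eq_inner inner_add_left inner_add_right inner_diff_left
          inner_diff_right inner_commute[of "X n" "X m"])
    ultimately show ?thesis using almost_min[of m] almost_min[of n] by linarith
  qed
  fix e :: real
  assume "e > 0"
  obtain M :: nat where M: "4 / e\<^sup>2 < real M" using reals_Archimedean2 by blast
  have "dist (X m) (X n) < e" if "m \<ge> M" "n \<ge> M" for m n
  proof -
    have "2 / (real m + 1) \<le> 2 / (real M + 1)" "2 / (real n + 1) \<le> 2 / (real M + 1)"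
      using that by (auto intro: divide_left_mono)
    then have "(norm (X m - X n))\<^sup>2 \<le> 4 / (real M + 1)" using dist_bound[of m n] by linarith
    also have "4 / (real M + 1) < e\<^sup>2"
    proof -
      have "4 < real M * e\<^sup>2" using M \<open>e > 0\<close> by (simp add: field_simps)
      also have "\<dots> \<le> (real M + 1) * e\<^sup>2" by (simp add: distrib_right)
      finally show ?thesis by (simp add: divide_less_eq add_pos_nonneg mult.commute)
    qed
    finally have "norm (X m - X n) < e" using \<open>e > 0\<close> by (simp add: power_less_imp_less_base)
    then show ?thesis by (simp add: dist_norm)
  qed
  then show "\<exists>M. \<forall>m\<ge>M. \<forall>n\<ge>M. dist (X m) (X n) < e" by blast
qed

lemma closed_convex_min_norm:
  fixes S :: "'a::{real_inner,complete_space} set"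
  assumes "closed S" "convex S" "S \<noteq> {}"
  obtains z where "z \<in> S" "\<And>y. y \<in> S \<Longrightarrow> norm z \<le> norm y"
proof -
  define d where "d = Inf ((\<lambda>x. (norm x)\<^sup>2) ` S)"
  have bdd: "bdd_below ((\<lambda>x. (norm x)\<^sup>2) ` S)" by (rule bdd_belowI[of _ 0]) auto
  have d_le: "d \<le> (norm y)\<^sup>2" if "y \<in> S" for y
    unfolding d_def by (rule cInf_lower) (use that bdd in auto)
  have "\<exists>x\<in>S. (norm x)\<^sup>2 < d + 1 / (real n + 1)" for n
  proof -
    have "Inf ((\<lambda>x. (norm x)\<^sup>2) ` S) < d + 1 / (real n + 1)" by (simp add: d_def)
    then show ?thesis using cInf_lessD[of "(\<lambda>x. (norm x)\<^sup>2) ` S"] assms(3) by blast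
  qed
  then obtain X where XS: "\<And>n. X n \<in> S"
    and almost_min: "\<And>n. (norm (X n))\<^sup>2 < d + 1 / (real n + 1)"
    by metis
  have "(X m + X n) /\<^sub>R 2 \<in> S" for m n
    using convexD[OF assms(2) XS[of m] XS[of n], of "1/2" "1/2"] by (simp add: scaleR_add_right)
  then have "Cauchy X"
    by (intro Cauchy_if_norm_almost_minimal[OF d_le almost_min])
  then obtain z where lim: "X \<longlonglongrightarrow> z" using Cauchy_convergent_iff convergent_def by blast
  have lim_le: "(norm z)\<^sup>2 \<le> d"
  proof (rule LIMSEQ_le)
    show "(\<lambda>n. (norm (X n))\<^sup>2) \<longlonglongrightarrow> (norm z)\<^sup>2" by (intro tendsto_intros lim)
    have "(\<lambda>n. d + inverse (real (Suc n))) \<longlonglongrightarrow> d + 0"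
      by (intro tendsto_intros LIMSEQ_inverse_real_of_nat)
    then show "(\<lambda>n. d + 1 / (real n + 1)) \<longlonglongrightarrow> d" by (simp add: inverse_eq_divide add.commute)
    show "\<exists>N. \<forall>n\<ge>N. (norm (X n))\<^sup>2 \<le> d + 1 / (real n + 1)"
      using almost_min by (auto intro: less_imp_le)
  qed
  have "norm z \<le> norm y" if "y \<in> S" for y
  proof (rule power2_le_imp_le)
    show "(norm z)\<^sup>2 \<le> (norm y)\<^sup>2" using lim_le d_le[OF that] by linarith
  qed simp
  with closed_sequentially[OF assms(1) XS lim] show ?thesis by (rule that)
qed

lemma riesz_representation:
  fixes f :: "'a::{real_inner,complete_space} \<Rightarrow> real"
  assumes "bounded_linear f"
  obtains z where "\<And>x. f x = inner x z"
proof (cases "\<forall>x. f x = 0")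
  case True
  then show ?thesis by (intro that[of 0]) simp
next
  case False
  define S where "S = {x. f x = 1}"
  from False obtain a where "f a \<noteq> 0" by auto
  then have "a /\<^sub>R f a \<in> S" using assms by (simp add: S_def linear_simps)
  then have "S \<noteq> {}" by blast
  moreover have "closed S"
    unfolding S_def by (intro closed_Collect_eq linear_continuous_on assms continuous_on_const)
  moreover have "convex S"
    using assms by (auto simp: S_def convex_def linear_simps)
  ultimately obtain z0 where "z0 \<in> S" and min: "\<And>y. y \<in> S \<Longrightarrow> norm z0 \<le> norm y"
    by (metis closed_convex_min_norm)
  then have fz0: "f z0 = 1" by (simp add: S_def)
  have orth: "inner z0 w = 0" if "f w = 0" for w
  proof (rule linear_coeff_eq_0_if_quadratic_nonneg)
    fix t :: real
    have "norm z0 \<le> norm (z0 + t *\<^sub>R w)"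
      using fz0 that assms by (intro min) (simp add: S_def linear_simps)
    then have "(norm z0)\<^sup>2 \<le> (norm (z0 + t *\<^sub>R w))\<^sup>2" by (simp add: power_mono)
    also have "\<dots> = inner (z0 + t *\<^sub>R w) (z0 + t *\<^sub>R w)" by (simp add: power2_norm_eq_inner)
    also have "\<dots> = inner z0 z0 + t * inner w z0 + t * inner z0 w + t * t * inner w w"
      by (simp add: inner_add_left inner_add_right distrib_left)
    also have "\<dots> = (norm z0)\<^sup>2 + 2 * t * inner z0 w + t\<^sup>2 * (norm w)\<^sup>2"
      by (simp add: inner_commute[of w z0] power2_eq_square flip: power2_norm_eq_inner)
    finally show "0 \<le> 2 * t * inner z0 w + t\<^sup>2 * (norm w)\<^sup>2" by simp
  qed
  have "f x = inner x (z0 /\<^sub>R inner z0 z0)" for x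
  proof -
    have "f (x - f x *\<^sub>R z0) = 0" using fz0 assms by (simp add: linear_simps)
    then have "inner z0 (x - f x *\<^sub>R z0) = 0" by (rule orth)
    then have "inner z0 x = f x * inner z0 z0" by (simp add: inner_diff_right)
    moreover have "z0 \<noteq> 0" using fz0 assms by (auto simp: linear_simps)
    ultimately show ?thesis by (simp add: inner_commute)
  qed
  then show ?thesis by (rule that)
qed

section \<open>Complex structure, adjoints and unitaries\<close>

instance complex_hilbert \<subseteq> banach ..

lemma scaleC_zero_left: "scaleC 0 (x :: 'a::complex_hilbert) = 0"
  using scaleC_of_real[of 0 x] by simp

lemma scaleC_diff_right: "scaleC c (x - y :: 'a::complex_hilbert) = scaleC c x - scaleC c y"
proof -
  have "scaleC c (x - y) + scaleC c y = scaleC c x" by (simp flip: scaleC_add_right)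
  then show ?thesis by (simp add: eq_diff_eq)
qed

lemma scaleC_scaleR_commute: "scaleC c (r *\<^sub>R x) = r *\<^sub>R scaleC c (x :: 'a::complex_hilbert)"
  by (metis scaleC_of_real scaleC_scaleC mult.commute)

lemma bounded_linear_scaleC: "bounded_linear (scaleC c :: 'a::complex_hilbert \<Rightarrow> 'a)"
  by (rule bounded_linear_intro[where K = "cmod c"])
    (simp_all add: scaleC_add_right scaleC_scaleR_commute norm_scaleC mult.commute)

lemma scaleC_eq_Re_Im: "scaleC c x = Re c *\<^sub>R x + Im c *\<^sub>R scaleC \<i> (x :: 'a::complex_hilbert)"
proof -
  have "scaleC c x = scaleC (complex_of_real (Re c)) x + scaleC (complex_of_real (Im c) * \<i>) x"
    by (metis complex_eq scaleC_add_left mult.commute)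
  then show ?thesis by (simp flip: scaleC_scaleC add: scaleC_of_real)
qed

lemma inner_scaleC_ii_left: "inner (scaleC \<i> x) y = - inner x (scaleC \<i> (y :: 'a::complex_hilbert))"
proof -
  have inner_ii: "inner (scaleC \<i> u) (scaleC \<i> v) = inner u v" for u v :: 'a
  proof -
    have "scaleC \<i> u + scaleC \<i> v = scaleC \<i> (u + v)" by (simp add: scaleC_add_right)
    then show ?thesis by (simp add: dot_norm[of "scaleC \<i> u"] dot_norm[of u] norm_scaleC)
  qed
  have "inner (scaleC \<i> x) y = inner (scaleC \<i> x) (scaleC \<i> (scaleC (- \<i>) y))"
    by (simp add: scaleC_scaleC scaleC_one)
  also have "\<dots> = inner x (scaleC (- \<i>) y)" by (rule inner_ii)
  also have "scaleC (- \<i>) y = - scaleC \<i> y"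
    using scaleC_eq_Re_Im[of "- \<i>" y] scaleC_eq_Re_Im[of \<i> y] by simp
  finally show ?thesis by simp
qed

lemma inner_scaleC_left: "inner (scaleC c x) y = inner x (scaleC (cnj c) (y :: 'a::complex_hilbert))"
  by (simp add: scaleC_eq_Re_Im[of c x] scaleC_eq_Re_Im[of "cnj c" y] inner_add_left
      inner_add_right inner_diff_right inner_scaleC_ii_left)

lemma adj_ex1:
  fixes T :: "'a::complex_hilbert \<Rightarrow> 'a"
  assumes "bounded_linear T"
  shows "\<exists>!T'. \<forall>x y. inner (T x) y = inner x (T' y)"
proof -
  have "\<exists>z. \<forall>x. inner (T x) y = inner x z" for y
    using bounded_linear_compose[OF bounded_linear_inner_left assms]
    by (metis riesz_representation)
  then obtain T' where "\<forall>x y. inner (T x) y = inner x (T' y)" by metis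
  moreover have "T'' = T'" if "\<forall>x y. inner (T x) y = inner x (T'' y)" for T''
    using that calculation by (metis ext vector_eq_ldot)
  ultimately show ?thesis by blast
qed

lemma adj_inner:
  fixes T :: "'a::complex_hilbert \<Rightarrow> 'a"
  assumes "bounded_linear T"
  shows "inner (T x) y = inner x (adj T y)"
  using theI'[OF adj_ex1[OF assms]] unfolding adj_def by blast

lemma adj_eqI:
  fixes T :: "'a::complex_hilbert \<Rightarrow> 'a"
  assumes "bounded_linear T" "\<And>x y. inner (T x) y = inner x (T' y)"
  shows "adj T = T'"
  unfolding adj_def by (rule the1_equality[OF adj_ex1[OF assms(1)]]) (use assms(2) in blast)

lemma norm_adj_le:
  fixes T :: "'a::complex_hilbert \<Rightarrow> 'a"
  assumes "bounded_linear T" "\<And>x. norm (T x) \<le> K * norm x"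
  shows "norm (adj T y) \<le> K * norm y"
proof (cases "adj T y = 0")
  case True
  then show ?thesis using order_trans[OF norm_ge_zero assms(2)] by simp
next
  case False
  have "(norm (adj T y))\<^sup>2 = inner (T (adj T y)) y"
    by (simp add: adj_inner[OF assms(1)] power2_norm_eq_inner)
  also have "\<dots> \<le> norm (T (adj T y)) * norm y" by (rule norm_cauchy_schwarz)
  also have "\<dots> \<le> K * norm (adj T y) * norm y" by (intro mult_right_mono assms(2)) simp
  finally show ?thesis using False by (simp add: power2_eq_square mult.commute mult.left_commute)
qed

lemma bounded_linear_adj:
  fixes T :: "'a::complex_hilbert \<Rightarrow> 'a"
  assumes "bounded_linear T"
  shows "bounded_linear (adj T)"
proof -
  obtain K where K: "\<And>x. norm (T x) \<le> norm x * K"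
    using bounded_linear.bounded[OF assms] by blast
  show ?thesis
  proof (rule bounded_linear_intro[where K = K])
    show "adj T (y + z) = adj T y + adj T z" for y z
      by (metis adj_inner[OF assms] inner_add_right vector_eq_ldot)
    show "adj T (r *\<^sub>R y) = r *\<^sub>R adj T y" for r y
      by (metis adj_inner[OF assms] inner_scaleR_right vector_eq_ldot)
    show "norm (adj T y) \<le> norm y * K" for y
      using norm_adj_le[OF assms, of K] K by (simp add: mult.commute)
  qed
qed

lemma bounded_clinear_adj:
  fixes T :: "'a::complex_hilbert \<Rightarrow> 'a"
  assumes "bounded_clinear_op T"
  shows "bounded_clinear_op (adj T)"
proof -
  have bl: "bounded_linear T" and cl: "\<And>c x. T (scaleC c x) = scaleC c (T x)"
    using assms by (auto simp: bounded_clinear_op_def)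
  have "adj T (scaleC c y) = scaleC c (adj T y)" for c y
  proof -
    have "inner x (adj T (scaleC c y)) = inner x (scaleC c (adj T y))" for x
    proof -
      have "inner x (adj T (scaleC c y)) = inner (T (scaleC (cnj c) x)) y"
        by (simp add: adj_inner[OF bl] inner_scaleC_left cl)
      also have "\<dots> = inner x (scaleC c (adj T y))"
        by (simp add: adj_inner[OF bl] inner_scaleC_left)
      finally show ?thesis .
    qed
    then show ?thesis using vector_eq_ldot by blast
  qed
  then show ?thesis using bounded_linear_adj[OF bl] by (simp add: bounded_clinear_op_def)
qed

lemma unitary_op_inverse:
  assumes "unitary_op U"
  shows "U (inv U y) = y" and "inv U (U x) = x"
  using assms by (simp_all add: unitary_op_def bij_is_inj bij_is_surj surj_f_inv_f)

lemma unitary_inner: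
  assumes "unitary_op (U :: 'a::complex_hilbert \<Rightarrow> 'b::complex_hilbert)"
  shows "inner (U x) (U y) = inner x y"
proof -
  have "U (x + y) = U x + U y" and "\<And>x. norm (U x) = norm x"
    using assms by (auto simp: unitary_op_def bounded_clinear_op_def linear_simps)
  then show ?thesis by (metis dot_norm)
qed

lemma unitary_inv:
  assumes "unitary_op (U :: 'a::complex_hilbert \<Rightarrow> 'b::complex_hilbert)"
  shows "unitary_op (inv U)"
proof -
  have bl: "bounded_linear U" and norm: "\<And>x. norm (U x) = norm x" and "bij U"
    and cl: "\<And>c x. U (scaleC c x) = scaleC c (U x)"
    using assms by (auto simp: unitary_op_def bounded_clinear_op_def)
  note U_inv = unitary_op_inverse(1)[OF assms]
  have inv_eqI: "inv U y = x" if "U x = y" for x y using that unitary_op_inverse(2)[OF assms] by blast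
  have "bounded_linear (inv U)"
    by (rule bounded_linear_intro[where K = 1])
      (auto intro!: inv_eqI simp: linear_simps[OF bl] U_inv norm[symmetric])
  moreover have "inv U (scaleC c y) = scaleC c (inv U y)" for c y
    by (intro inv_eqI) (simp add: cl U_inv)
  moreover have "norm (inv U y) = norm y" for y by (metis norm U_inv)
  ultimately show ?thesis
    using \<open>bij U\<close> by (simp add: unitary_op_def bounded_clinear_op_def bij_imp_bij_inv)
qed

lemma unitary_inner_inv:
  assumes "unitary_op (U :: 'a::complex_hilbert \<Rightarrow> 'b::complex_hilbert)"
  shows "inner (U x) y = inner x (inv U y)"
  using unitary_inner[OF assms, of x "inv U y"] by (simp add: unitary_op_inverse[OF assms])

lemma closure_unitary_image:
  assumes "unitary_op (U :: 'a::complex_hilbert \<Rightarrow> 'b::complex_hilbert)"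
  shows "closure (U ` R) = U ` closure R"
proof -
  have "bij U" using assms by (simp add: unitary_op_def)
  note U_inv = unitary_op_inverse(1)[OF assms]
  have cont: "continuous_on UNIV U" "continuous_on UNIV (inv U)"
    using assms unitary_inv[OF assms]
    by (auto intro: linear_continuous_on simp: unitary_op_def bounded_clinear_op_def)
  with \<open>bij U\<close> U_inv have "homeomorphism UNIV UNIV U (inv U)"
    by (simp add: homeomorphism_def bij_is_inj bij_is_surj bij_imp_bij_inv)
  with \<open>bij U\<close> cont U_inv show ?thesis
    by (intro closure_bij_homeomorphic_image_eq[of U UNIV UNIV "inv U" UNIV UNIV]) auto
qed

section \<open>The power series of \<open>1 - \<surd>(1 - t)\<close>\<close>

text \<open>The Taylor coefficients of \<open>c(t) = 1 - \<surd>(1 - t)\<close>, determined by \<open>2 c = t + c\<^sup>2\<close>. They are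
  nonnegative with sum \<open>c(1) = 1\<close>, so \<open>c(C)\<close> converges absolutely for every contraction \<open>C\<close>.\<close>

function sqrt_coeff :: "nat \<Rightarrow> real" where
  "sqrt_coeff n =
    (if n = 0 then 0 else if n = 1 then 1/2
     else (\<Sum>k\<in>{1..<n}. sqrt_coeff k * sqrt_coeff (n - k)) / 2)"
  by auto
termination by (relation "Wellfounded.measure id") auto

declare sqrt_coeff.simps [simp del]

lemma sqrt_coeff_0 [simp]: "sqrt_coeff 0 = 0"
  and sqrt_coeff_1 [simp]: "sqrt_coeff (Suc 0) = 1/2"
  by (simp_all add: sqrt_coeff.simps)

lemma sqrt_coeff_ge_2:
  "n \<ge> 2 \<Longrightarrow> sqrt_coeff n = (\<Sum>k\<in>{1..<n}. sqrt_coeff k * sqrt_coeff (n - k)) / 2"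
  by (subst sqrt_coeff.simps) simp

lemma sqrt_coeff_nonneg: "sqrt_coeff n \<ge> 0"
proof (induction n rule: less_induct)
  case (less n)
  show ?case
  proof (cases "n \<ge> 2")
    case True
    have "(\<Sum>k\<in>{1..<n}. sqrt_coeff k * sqrt_coeff (n - k)) \<ge> 0"
      using less by (intro sum_nonneg) auto
    then show ?thesis using True by (simp add: sqrt_coeff_ge_2)
  next
    case False
    then have "n = 0 \<or> n = 1" by auto
    then show ?thesis by auto
  qed
qed

lemma sqrt_coeff_convolution:
  "(\<Sum>n\<le>k. sqrt_coeff n * sqrt_coeff (k - n)) = 2 * sqrt_coeff k - (if k = 1 then 1 else 0)"
proof (cases "k \<ge> 2")
  case True
  have "(\<Sum>n\<le>k. sqrt_coeff n * sqrt_coeff (k - n)) = (\<Sum>n\<in>{1..<k}. sqrt_coeff n * sqrt_coeff (k - n))"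
    by (rule sum.mono_neutral_right) (auto simp: not_less_eq_eq le_antisym)
  then show ?thesis using True by (simp add: sqrt_coeff_ge_2)
next
  case False
  then have "k = 0 \<or> k = 1" by auto
  then show ?thesis by auto
qed

definition lower_triangle :: "nat \<Rightarrow> (nat \<times> nat) set" where
  "lower_triangle L = {(n, m). n + m < L}"

lemma lower_triangle_subset: "lower_triangle L \<subseteq> {..<L} \<times> {..<L}"
  by (auto simp: lower_triangle_def)

lemma finite_lower_triangle [simp]: "finite (lower_triangle L)"
  by (rule finite_subset[OF lower_triangle_subset]) simp

lemma sum_lower_triangle:
  "(\<Sum>p\<in>lower_triangle L. g (fst p) (snd p)) = (\<Sum>k<L. \<Sum>n\<le>k. g n (k - n))"
proof (induction L)
  case 0
  then show ?case by (simp add: lower_triangle_def)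
next
  case (Suc L)
  have "lower_triangle (Suc L) = lower_triangle L \<union> (\<lambda>n. (n, L - n)) ` {..L}"
    by (auto simp: lower_triangle_def image_iff)
  moreover have "lower_triangle L \<inter> (\<lambda>n. (n, L - n)) ` {..L} = {}"
    by (auto simp: lower_triangle_def)
  moreover have "inj_on (\<lambda>n. (n, L - n)) {..L}" by (auto simp: inj_on_def)
  ultimately show ?case using Suc by (simp add: sum.union_disjoint sum.reindex)
qed

lemma sum_lower_triangle_sqrt_coeff:
  "(\<Sum>p\<in>lower_triangle L. sqrt_coeff (fst p) * sqrt_coeff (snd p))
     = 2 * (\<Sum>k<L. sqrt_coeff k) - (if L \<ge> 2 then 1 else 0)"
proof -
  have "(\<Sum>k<L. \<Sum>n\<le>k. sqrt_coeff n * sqrt_coeff (k - n))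
      = 2 * (\<Sum>k<L. sqrt_coeff k) - (if L \<ge> 2 then 1 else 0)"
    by (induction L) (auto simp: sqrt_coeff_convolution sum_distrib_left)
  then show ?thesis using sum_lower_triangle[of "\<lambda>n m. sqrt_coeff n * sqrt_coeff m" L] by simp
qed

lemma sum_sqrt_coeff_le_1: "(\<Sum>k<N. sqrt_coeff k) \<le> 1"
proof (induction N rule: less_induct)
  case (less N)
  show ?case
  proof (cases "N \<ge> 2")
    case False
    then have "N = 0 \<or> N = 1" by auto
    then show ?thesis by auto
  next
    case True
    define M where "M = N - 1"
    let ?c = "\<lambda>p. sqrt_coeff (fst p) * sqrt_coeff (snd p)"
    \<comment> \<open>terms with a zero index vanish, the others lie in the square of side \<open>N - 1\<close>\<close>
    have "(\<Sum>p\<in>lower_triangle N. ?c p) = (\<Sum>p\<in>lower_triangle N \<inter> {p. 0 < fst p \<and> 0 < snd p}. ?c p)"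
      by (rule sum.mono_neutral_right) (auto, (metis sqrt_coeff_0 gr0I)+)
    also have "\<dots> \<le> (\<Sum>p\<in>{..<M} \<times> {..<M}. ?c p)"
      by (rule sum_mono2) (auto simp: lower_triangle_def M_def sqrt_coeff_nonneg)
    also have "\<dots> = (\<Sum>k<M. sqrt_coeff k)\<^sup>2"
      by (simp add: power2_eq_square sum_product sum.cartesian_product case_prod_beta)
    also have "\<dots> \<le> 1"
      using less[of M] True sum_nonneg[of "{..<M}" sqrt_coeff] sqrt_coeff_nonneg
      by (simp add: M_def power_le_one)
    finally show ?thesis using True by (simp add: sum_lower_triangle_sqrt_coeff)
  qed
qed

lemma summable_sqrt_coeff: "summable sqrt_coeff"
  by (rule summableI_nonneg_bounded[where x = 1]) (auto simp: sqrt_coeff_nonneg sum_sqrt_coeff_le_1)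

lemma suminf_sqrt_coeff_le_1: "suminf sqrt_coeff \<le> 1"
  by (rule suminf_le_const[OF summable_sqrt_coeff]) (simp add: sum_sqrt_coeff_le_1)

lemma sum_square_minus_lower_triangle_le:
  assumes "N \<ge> 2"
  shows "(\<Sum>p\<in>{..<N} \<times> {..<N} - lower_triangle N. sqrt_coeff (fst p) * sqrt_coeff (snd p))
          \<le> 2 * ((\<Sum>k<2*N. sqrt_coeff k) - (\<Sum>k<N. sqrt_coeff k))"
proof -
  let ?c = "\<lambda>p. sqrt_coeff (fst p) * sqrt_coeff (snd p)"
  have "lower_triangle N \<subseteq> lower_triangle (2*N)" by (auto simp: lower_triangle_def)
  moreover have "{..<N} \<times> {..<N} - lower_triangle N \<subseteq> lower_triangle (2*N) - lower_triangle N"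
    by (auto simp: lower_triangle_def)
  then have "(\<Sum>p\<in>{..<N} \<times> {..<N} - lower_triangle N. ?c p)
      \<le> (\<Sum>p\<in>lower_triangle (2*N) - lower_triangle N. ?c p)"
    by (rule sum_mono2[rotated]) (auto simp: sqrt_coeff_nonneg)
  ultimately show ?thesis
    using assms by (simp add: sum_diff sum_lower_triangle_sqrt_coeff)
qed

lemma sqrt_coeff_tail_tendsto_0:
  "(\<lambda>N. 2 * ((\<Sum>k<2*N. sqrt_coeff k) - (\<Sum>k<N. sqrt_coeff k))) \<longlonglongrightarrow> 0"
proof -
  have lim: "(\<lambda>N. \<Sum>k<N. sqrt_coeff k) \<longlonglongrightarrow> suminf sqrt_coeff"
    using summable_sqrt_coeff by (simp add: summable_LIMSEQ)
  have "strict_mono (\<lambda>n::nat. 2 * n)" by (simp add: strict_mono_def)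
  then have "(\<lambda>N. \<Sum>k<2*N. sqrt_coeff k) \<longlonglongrightarrow> suminf sqrt_coeff"
    using LIMSEQ_subseq_LIMSEQ[OF lim] by (simp add: o_def)
  then have "(\<lambda>N. 2 * ((\<Sum>k<2*N. sqrt_coeff k) - (\<Sum>k<N. sqrt_coeff k)))
      \<longlonglongrightarrow> 2 * (suminf sqrt_coeff - suminf sqrt_coeff)"
    by (intro tendsto_intros lim)
  then show ?thesis by simp
qed

section \<open>Positive square root of \<open>I - C\<close> for a selfadjoint contraction \<open>C\<close>\<close>

lemma nonneg_selfadjoint_inner_eq_0:
  fixes B :: "'a::real_inner \<Rightarrow> 'a"
  assumes "bounded_linear B" and selfadjoint: "\<And>x y. inner (B x) y = inner x (B y)"
    and nonneg: "\<And>x. inner (B x) x \<ge> 0" and "inner (B y) y = 0"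
  shows "B y = 0"
proof -
  have "inner (B y) z = 0" for z
  proof (rule linear_coeff_eq_0_if_quadratic_nonneg)
    fix t :: real
    have "0 \<le> inner (B (y + t *\<^sub>R z)) (y + t *\<^sub>R z)" by (rule nonneg)
    also have "\<dots> = inner (B y) y + t * inner (B y) z + t * inner (B z) y + t * t * inner (B z) z"
      by (simp add: linear_simps[OF assms(1)] inner_add_left inner_add_right distrib_left)
    also have "inner (B z) y = inner (B y) z" by (metis selfadjoint inner_commute)
    finally show "0 \<le> 2 * t * inner (B y) z + t\<^sup>2 * inner (B z) z"
      using assms(4) by (simp add: power2_eq_square algebra_simps)
  qed
  from this[of "B y"] show ?thesis by simp
qed

locale selfadjoint_contraction =
  fixes C :: "'a::complex_hilbert \<Rightarrow> 'a"
  assumes bounded_clinear: "bounded_clinear_op C"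
    and selfadjoint: "\<And>x y. inner (C x) y = inner x (C y)"
    and contraction: "\<And>x. norm (C x) \<le> norm x"
begin

lemma bounded_linear: "bounded_linear C"
  using bounded_clinear by (simp add: bounded_clinear_op_def)

lemma bounded_linear_pow: "bounded_linear (C ^^ n)"
  by (induction n) (auto simp: bounded_linear_ident[unfolded id_def]
      intro: bounded_linear_compose[OF bounded_linear])

lemma norm_pow_le: "norm ((C ^^ n) x) \<le> norm x"
  by (induction n) (auto intro: order_trans[OF contraction])

lemma pow_selfadjoint: "inner ((C ^^ n) x) y = inner x ((C ^^ n) y)"
  by (induction n arbitrary: x y) (auto simp: selfadjoint funpow_swap1)

lemma pow_commute: "(\<And>x. B (C x) = C (B x)) \<Longrightarrow> B ((C ^^ n) x) = (C ^^ n) (B x)"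
  by (induction n) auto

definition series_term :: "'a \<Rightarrow> nat \<Rightarrow> 'a" where
  "series_term x n = sqrt_coeff n *\<^sub>R (C ^^ n) x"

text \<open>\<open>series x\<close> is \<open>c(C) x\<close> with \<open>c(t) = 1 - \<surd>(1 - t)\<close>.\<close>

definition series :: "'a \<Rightarrow> 'a" where
  "series x = suminf (series_term x)"

definition partial_sum :: "nat \<Rightarrow> 'a \<Rightarrow> 'a" where
  "partial_sum N x = (\<Sum>n<N. series_term x n)"

lemma norm_series_term_le: "norm (series_term x n) \<le> sqrt_coeff n * norm x"
  by (simp add: series_term_def sqrt_coeff_nonneg mult_left_mono norm_pow_le)

lemma summable_series_term: "summable (series_term x)"
proof -
  have "summable (\<lambda>n. sqrt_coeff n * norm x)" by (intro summable_mult2 summable_sqrt_coeff)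
  then have "summable (\<lambda>n. norm (series_term x n))"
    by (rule summable_comparison_test') (simp add: norm_series_term_le)
  then show ?thesis by (rule summable_norm_cancel)
qed

lemma partial_sum_tendsto: "(\<lambda>N. partial_sum N x) \<longlonglongrightarrow> series x"
  unfolding partial_sum_def series_def by (rule summable_LIMSEQ[OF summable_series_term])

lemma norm_series_le: "norm (series x) \<le> norm x"
proof -
  have "norm (series x) \<le> (\<Sum>n. sqrt_coeff n * norm x)"
    unfolding series_def
    by (rule norm_suminf_le[OF norm_series_term_le]) (intro summable_mult2 summable_sqrt_coeff)
  also have "\<dots> = suminf sqrt_coeff * norm x" by (rule suminf_mult2[symmetric, OF summable_sqrt_coeff])
  also have "\<dots> \<le> norm x" using mult_right_mono[OF suminf_sqrt_coeff_le_1 norm_ge_zero] by simp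
  finally show ?thesis .
qed

lemma norm_partial_sum_le: "norm (partial_sum N x) \<le> norm x"
proof -
  have "norm (partial_sum N x) \<le> (\<Sum>n<N. sqrt_coeff n * norm x)"
    unfolding partial_sum_def by (rule order_trans[OF norm_sum]) (intro sum_mono norm_series_term_le)
  also have "\<dots> = (\<Sum>n<N. sqrt_coeff n) * norm x" by (simp add: sum_distrib_right)
  also have "\<dots> \<le> norm x" using mult_right_mono[OF sum_sqrt_coeff_le_1 norm_ge_zero] by simp
  finally show ?thesis .
qed

lemma series_commute:
  assumes "bounded_linear B" and "\<And>x. B (C x) = C (B x)"
  shows "B (series x) = series (B x)"
proof -
  have "B (series x) = (\<Sum>n. B (series_term x n))"
    unfolding series_def by (rule bounded_linear.suminf[OF assms(1) summable_series_term])
  also have "(\<lambda>n. B (series_term x n)) = series_term (B x)"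
    by (simp add: fun_eq_iff series_term_def linear_simps[OF assms(1)] pow_commute[of B, OF assms(2)])
  finally show ?thesis by (simp add: series_def)
qed

lemma bounded_linear_series: "bounded_linear series"
proof (rule bounded_linear_intro[where K = 1])
  show "series (x + y) = series x + series y" for x y
  proof -
    have "series_term (x + y) = (\<lambda>n. series_term x n + series_term y n)"
      by (simp add: fun_eq_iff series_term_def linear_simps[OF bounded_linear_pow] scaleR_add_right)
    then show ?thesis
      using suminf_add[OF summable_series_term summable_series_term, of x y] by (simp add: series_def)
  qed
  show "series (r *\<^sub>R x) = r *\<^sub>R series x" for r x
  proof -
    have "series_term (r *\<^sub>R x) = (\<lambda>n. r *\<^sub>R series_term x n)"
      by (simp add: fun_eq_iff series_term_def linear_simps[OF bounded_linear_pow])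
    then show ?thesis using suminf_scaleR_right[OF summable_series_term, of r x] by (simp add: series_def)
  qed
  show "norm (series x) \<le> norm x * 1" for x using norm_series_le by simp
qed

lemma series_scaleC: "series (scaleC c x) = scaleC c (series x)"
  using bounded_clinear
  by (intro series_commute[OF bounded_linear_scaleC, symmetric]) (simp add: bounded_clinear_op_def)

lemma series_selfadjoint: "inner (series x) y = inner x (series y)"
proof -
  have "inner (series x) y = (\<Sum>n. inner (series_term x n) y)"
    unfolding series_def by (rule bounded_linear.suminf[OF bounded_linear_inner_left summable_series_term])
  also have "\<dots> = (\<Sum>n. inner x (series_term y n))"
    by (simp add: series_term_def pow_selfadjoint)
  also have "\<dots> = inner x (series y)"
    unfolding series_def
    by (rule bounded_linear.suminf[OF bounded_linear_inner_right summable_series_term, symmetric])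
  finally show ?thesis .
qed

definition cross_terms :: "nat \<Rightarrow> 'a \<Rightarrow> 'a" where
  "cross_terms N x = (\<Sum>p\<in>{..<N} \<times> {..<N} - lower_triangle N.
      (sqrt_coeff (fst p) * sqrt_coeff (snd p)) *\<^sub>R (C ^^ (fst p + snd p)) x)"

lemma sum_convolution_pow:
  "(\<Sum>k<N. (\<Sum>n\<le>k. sqrt_coeff n * sqrt_coeff (k - n)) *\<^sub>R (C ^^ k) x)
     = 2 *\<^sub>R partial_sum N x - (if N \<ge> 2 then C x else 0)"
proof (induction N)
  case (Suc N)
  then show ?case
    by (cases "N = 1") (auto simp: partial_sum_def series_term_def sqrt_coeff_convolution algebra_simps)
qed (simp add: partial_sum_def)

lemma partial_sum_square:
  assumes "N \<ge> 2"
  shows "partial_sum N (partial_sum N x) = 2 *\<^sub>R partial_sum N x - C x + cross_terms N x"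
proof -
  let ?t = "\<lambda>p. (sqrt_coeff (fst p) * sqrt_coeff (snd p)) *\<^sub>R (C ^^ (fst p + snd p)) x"
  have "partial_sum N (partial_sum N x) = (\<Sum>p\<in>{..<N} \<times> {..<N}. ?t p)"
    by (simp add: partial_sum_def series_term_def linear_simps[OF bounded_linear_pow]
        linear_sum[OF bounded_linear.linear[OF bounded_linear_pow]] funpow_add scaleR_sum_right
        sum.cartesian_product case_prod_beta)
  also have "\<dots> = cross_terms N x + (\<Sum>p\<in>lower_triangle N. ?t p)"
    unfolding cross_terms_def by (rule sum.subset_diff[OF lower_triangle_subset]) simp
  also have "(\<Sum>p\<in>lower_triangle N. ?t p)
      = (\<Sum>k<N. (\<Sum>n\<le>k. sqrt_coeff n * sqrt_coeff (k - n)) *\<^sub>R (C ^^ k) x)"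
    using sum_lower_triangle[of "\<lambda>n m. (sqrt_coeff n * sqrt_coeff m) *\<^sub>R (C ^^ (n + m)) x" N]
    by (simp add: scaleR_sum_left)
  also have "\<dots> = 2 *\<^sub>R partial_sum N x - C x"
    using assms by (simp add: sum_convolution_pow)
  finally show ?thesis by simp
qed

lemma cross_terms_tendsto_0: "(\<lambda>N. cross_terms N x) \<longlonglongrightarrow> 0"
proof (rule Lim_null_comparison)
  let ?tail = "\<lambda>N. 2 * ((\<Sum>k<2*N. sqrt_coeff k) - (\<Sum>k<N. sqrt_coeff k))"
  have bound: "norm (cross_terms N x) \<le> ?tail N * norm x" if "N \<ge> 2" for N
  proof -
    have "norm (cross_terms N x) \<le> (\<Sum>p\<in>{..<N} \<times> {..<N} - lower_triangle N.
        sqrt_coeff (fst p) * sqrt_coeff (snd p)) * norm x"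
      unfolding cross_terms_def sum_distrib_right
      by (rule order_trans[OF norm_sum], intro sum_mono)
        (simp add: sqrt_coeff_nonneg mult_left_mono norm_pow_le)
    also have "\<dots> \<le> ?tail N * norm x"
      by (intro mult_right_mono sum_square_minus_lower_triangle_le that) simp
    finally show ?thesis .
  qed
  show "\<forall>\<^sub>F N in sequentially. norm (cross_terms N x) \<le> ?tail N * norm x"
    using eventually_ge_at_top[of "2::nat"] by (rule eventually_mono) (rule bound)
  show "(\<lambda>N. ?tail N * norm x) \<longlonglongrightarrow> 0"
    using tendsto_mult_left_zero[OF sqrt_coeff_tail_tendsto_0, of "norm x"] by simp
qed

lemma series_square: "series (series x) = 2 *\<^sub>R series x - C x"
proof (rule LIMSEQ_unique)
  have "(\<lambda>N. partial_sum N (partial_sum N x - series x)) \<longlonglongrightarrow> 0"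
  proof (rule Lim_null_comparison)
    show "\<forall>\<^sub>F N in sequentially.
        norm (partial_sum N (partial_sum N x - series x)) \<le> norm (partial_sum N x - series x)"
      by (simp add: norm_partial_sum_le)
    show "(\<lambda>N. norm (partial_sum N x - series x)) \<longlonglongrightarrow> 0"
      using partial_sum_tendsto[of x] by (simp add: LIM_zero tendsto_norm_zero)
  qed
  then have "(\<lambda>N. partial_sum N (partial_sum N x - series x) + partial_sum N (series x))
      \<longlonglongrightarrow> 0 + series (series x)"
    by (intro tendsto_add partial_sum_tendsto)
  then show "(\<lambda>N. partial_sum N (partial_sum N x)) \<longlonglongrightarrow> series (series x)"
    by (simp add: partial_sum_def series_term_def linear_simps[OF bounded_linear_pow]
        scaleR_diff_right sum_subtractf)
  have "(\<lambda>N. 2 *\<^sub>R partial_sum N x - C x + cross_terms N x) \<longlonglongrightarrow> 2 *\<^sub>R series x - C x + 0"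
    by (intro tendsto_intros partial_sum_tendsto cross_terms_tendsto_0)
  then have "(\<lambda>N. 2 *\<^sub>R partial_sum N x - C x + cross_terms N x) \<longlonglongrightarrow> 2 *\<^sub>R series x - C x"
    by simp
  then show "(\<lambda>N. partial_sum N (partial_sum N x)) \<longlonglongrightarrow> 2 *\<^sub>R series x - C x"
    by (rule Lim_transform_eventually)
      (use eventually_ge_at_top[of "2::nat"] in \<open>eventually_elim, simp add: partial_sum_square\<close>)
qed

definition root :: "'a \<Rightarrow> 'a" where
  "root x = x - series x"

lemma bounded_linear_root: "bounded_linear root"
  unfolding root_def[abs_def] by (intro bounded_linear_sub bounded_linear_ident bounded_linear_series)

lemma root_selfadjoint: "inner (root x) y = inner x (root y)"
  by (simp add: root_def inner_diff_left inner_diff_right series_selfadjoint)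

lemma root_nonneg: "inner (root x) x \<ge> 0"
proof -
  have "inner (series x) x \<le> norm (series x) * norm x" by (rule norm_cauchy_schwarz)
  also have "\<dots> \<le> norm x * norm x" by (intro mult_right_mono norm_series_le) simp
  finally show ?thesis by (simp add: root_def inner_diff_left dot_square_norm power2_eq_square)
qed

lemma positive_root: "positive_op root"
proof -
  have "adj root = root" by (rule adj_eqI[OF bounded_linear_root root_selfadjoint])
  moreover have "root (scaleC c x) = scaleC c (root x)" for c x
    by (simp add: root_def series_scaleC scaleC_diff_right)
  ultimately show ?thesis
    using bounded_linear_root root_nonneg by (simp add: positive_op_def bounded_clinear_op_def)
qed

lemma root_square: "root \<circ> root = (\<lambda>x. x - C x)"
  by (simp add: fun_eq_iff root_def linear_simps[OF bounded_linear_series] series_square scaleR_2)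

lemma positive_sqrt_unique:
  assumes "positive_op B" and square: "B \<circ> B = (\<lambda>x. x - C x)"
  shows "B = root"
proof -
  have bl: "bounded_linear B" using assms(1) by (simp add: positive_op_def bounded_clinear_op_def)
  have selfadj: "inner (B x) y = inner x (B y)" for x y
    using adj_inner[OF bl, of x y] assms(1) by (simp add: positive_op_def)
  have nonneg: "inner (B x) x \<ge> 0" for x using assms(1) by (simp add: positive_op_def)
  have BB: "B (B x) = x - C x" for x using fun_cong[OF square, of x] by simp
  have "B (C x) = C (B x)" for x
    using BB[of "B x"] arg_cong[OF BB[of x], of B] by (simp add: linear_simps[OF bl])
  then have B_root: "B (root x) = root (B x)" for x
    by (simp add: root_def linear_simps[OF bl] series_commute[OF bl])
  \<comment> \<open>\<open>B\<close> commutes with \<open>root\<close>, so \<open>(B + root) (B - root) = B\<^sup>2 - root\<^sup>2 = 0\<close>\<close>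
  define T where "T x = B x - root x" for x
  have sum_0: "B (T x) + root (T x) = 0" for x
    using fun_cong[OF root_square, of x]
    by (simp add: T_def linear_simps[OF bl] linear_simps[OF bounded_linear_root] BB B_root)
  have "T x = 0" for x
  proof -
    have "inner (B (T x)) (T x) + inner (root (T x)) (T x) = 0"
      using sum_0[of x] by (simp flip: inner_add_left)
    then have "inner (B (T x)) (T x) = 0" "inner (root (T x)) (T x) = 0"
      using nonneg[of "T x"] root_nonneg[of "T x"] by linarith+
    then have "B (T x) = 0" "root (T x) = 0"
      by (auto intro: nonneg_selfadjoint_inner_eq_0 bl selfadj nonneg
          bounded_linear_root root_selfadjoint root_nonneg)
    then have "inner (T x) (T x) = 0"
      by (simp add: T_def inner_diff_left selfadj root_selfadjoint)
    then show ?thesis by simp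
  qed
  then show ?thesis by (auto simp: T_def)
qed

lemma op_sqrt_eq_root: "op_sqrt (\<lambda>x. x - C x) = root"
  unfolding op_sqrt_def using positive_root root_square positive_sqrt_unique by blast

end

section \<open>\<open>\<Gamma>\<^sub>3\<close>-contractions and their defect operators\<close>

text \<open>The third coordinate \<open>p = z\<^sub>1z\<^sub>2z\<^sub>3\<close> has modulus at most \<open>1\<close> on \<open>\<Gamma>\<^sub>3\<close>, so the defining
  inequality applied to \<open>f(s\<^sub>1, s\<^sub>2, p) = p\<close> (with denominator \<open>1\<close>) bounds \<open>\<parallel>P\<parallel>\<close> by \<open>1\<close>.\<close>

lemma gamma3_contraction_norm_le:
  assumes "gamma3_contraction S1 S2 P"
  shows "norm (P x) \<le> norm x"
proof -
  define p :: "nat \<Rightarrow> nat \<Rightarrow> nat \<Rightarrow> complex" where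
    "p = (\<lambda>i j k. if i = 0 \<and> j = 0 \<and> k = 1 then 1 else 0)"
  define q :: "nat \<Rightarrow> nat \<Rightarrow> nat \<Rightarrow> complex" where "q = (\<lambda>i j k. 1)"
  have q_eval: "poly3_eval 1 q z = 1" for z by (cases z) (simp add: poly3_eval_def q_def)
  have p_eval: "poly3_eval 2 p z = snd (snd z)" for z
    by (cases z) (simp add: poly3_eval_def p_def numeral_2_eq_2 lessThan_Suc)
  have q_op: "poly3_op 1 q S1 S2 P = id"
    by (simp add: fun_eq_iff poly3_op_def q_def scaleC_one)
  have p_op: "poly3_op 2 p S1 S2 P = P"
    by (simp add: fun_eq_iff poly3_op_def p_def numeral_2_eq_2 lessThan_Suc scaleC_one scaleC_zero_left)
  have "\<forall>z\<in>Gamma3. poly3_eval 1 q z \<noteq> 0" using q_eval by (metis one_neq_zero)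
  then obtain R where "R \<circ> poly3_op 1 q S1 S2 P = id"
    and bound: "\<And>x. norm (poly3_op 2 p S1 S2 P (R x)) \<le>
          Sup ((\<lambda>z. cmod (poly3_eval 2 p z / poly3_eval 1 q z)) ` Gamma3) * norm x"
    using assms unfolding gamma3_contraction_def by blast
  then have "R = id" using q_op by simp
  have sup_le: "Sup ((\<lambda>z. cmod (poly3_eval 2 p z / poly3_eval 1 q z)) ` Gamma3) \<le> 1"
  proof (rule cSup_least)
    show "(\<lambda>z. cmod (poly3_eval 2 p z / poly3_eval 1 q z)) ` Gamma3 \<noteq> {}"
      unfolding Gamma3_def by (auto intro!: exI[of _ 0])
  next
    fix v
    assume "v \<in> (\<lambda>z. cmod (poly3_eval 2 p z / poly3_eval 1 q z)) ` Gamma3"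
    then obtain z1 z2 z3 where "v = cmod z1 * cmod z2 * cmod z3"
      and "cmod z1 \<le> 1" "cmod z2 \<le> 1" "cmod z3 \<le> 1"
      unfolding Gamma3_def by (auto simp: q_eval[unfolded One_nat_def] p_eval norm_mult)
    then show "v \<le> 1" by (simp add: mult_le_one)
  qed
  show ?thesis
    using bound[of x] mult_right_mono[OF sup_le norm_ge_zero[of x]] by (simp add: \<open>R = id\<close> p_op)
qed

lemma positive_sqrt_iff_defect_op:
  fixes P :: "'a::complex_hilbert \<Rightarrow> 'a"
  assumes "bounded_clinear_op P" and "\<And>x. norm (P x) \<le> norm x"
  shows "positive_op B \<and> B \<circ> B = (\<lambda>x. x - adj P (P x)) \<longleftrightarrow> B = defect_op P"
proof -
  have bl: "bounded_linear P" using assms(1) by (simp add: bounded_clinear_op_def)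
  interpret selfadjoint_contraction "\<lambda>x. adj P (P x)"
  proof
    have "bounded_linear (\<lambda>x. adj P (P x))"
      by (rule bounded_linear_compose[OF bounded_linear_adj[OF bl] bl])
    then show "bounded_clinear_op (\<lambda>x. adj P (P x))"
      using assms(1) bounded_clinear_adj[OF assms(1)] by (simp add: bounded_clinear_op_def)
    show "inner (adj P (P x)) y = inner x (adj P (P y))" for x y
    proof -
      have "inner (adj P (P x)) y = inner y (adj P (P x))" by (rule inner_commute)
      also have "\<dots> = inner (P y) (P x)" by (rule adj_inner[OF bl, symmetric])
      also have "\<dots> = inner (P x) (P y)" by (rule inner_commute)
      also have "\<dots> = inner x (adj P (P y))" by (rule adj_inner[OF bl])
      finally show ?thesis .
    qed
    have adj_le: "norm (adj P y) \<le> norm y" for y using norm_adj_le[OF bl, of 1 y] assms(2) by simp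
    show "norm (adj P (P x)) \<le> norm x" for x using adj_le[of "P x"] assms(2)[of x] by linarith
  qed
  have "defect_op P = root" unfolding defect_op_def by (rule op_sqrt_eq_root)
  with positive_root root_square show ?thesis by (auto intro: positive_sqrt_unique)
qed

section \<open>Unitary equivalence\<close>

lemma positive_op_unitary_conj:
  assumes "unitary_op (U :: 'a::complex_hilbert \<Rightarrow> 'b::complex_hilbert)" and "positive_op D"
  shows "positive_op (\<lambda>y. U (D (inv U y)))"
proof -
  have U: "bounded_clinear_op U" "bounded_clinear_op (inv U)"
    using assms(1) unitary_inv[OF assms(1)] by (simp_all add: unitary_op_def)
  have D: "bounded_clinear_op D" "adj D = D" "\<And>x. inner (D x) x \<ge> 0"
    using assms(2) by (simp_all add: positive_op_def)
  then have D_selfadjoint: "inner (D x) y = inner x (D y)" for x y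
    by (metis adj_inner bounded_clinear_op_def)
  have bl: "bounded_linear (\<lambda>y. U (D (inv U y)))"
    using U D(1) by (auto simp: bounded_clinear_op_def intro: bounded_linear_compose)
  have "adj (\<lambda>y. U (D (inv U y))) = (\<lambda>y. U (D (inv U y)))"
  proof (rule adj_eqI[OF bl])
    fix x y
    have "inner (U (D (inv U x))) y = inner (inv U x) (D (inv U y))"
      by (simp add: unitary_inner_inv[OF assms(1)] D_selfadjoint)
    also have "\<dots> = inner x (U (D (inv U y)))"
      using unitary_inner[OF assms(1), of "inv U x"] by (simp add: unitary_op_inverse[OF assms(1)])
    finally show "inner (U (D (inv U x))) y = inner x (U (D (inv U y)))" .
  qed
  moreover have "inner (U (D (inv U x))) x \<ge> 0" for x
    using D(3)[of "inv U x"] by (simp add: unitary_inner_inv[OF assms(1)])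
  ultimately show ?thesis
    using bl U D(1) by (simp add: positive_op_def bounded_clinear_op_def)
qed

lemma adj_intertwine:
  fixes U :: "'a::complex_hilbert \<Rightarrow> 'b::complex_hilbert"
  assumes "unitary_op U" "bounded_linear S" "bounded_linear T" "U \<circ> S = T \<circ> U"
  shows "U (adj S x) = adj T (U x)"
proof -
  have "adj T = (\<lambda>y. U (adj S (inv U y)))"
  proof (rule adj_eqI[OF assms(3)])
    fix x y
    have "inner (T x) y = inner (U (S (inv U x))) y"
      using fun_cong[OF assms(4), of "inv U x"] by (simp add: unitary_op_inverse[OF assms(1)])
    also have "\<dots> = inner (inv U x) (adj S (inv U y))"
      by (simp add: unitary_inner_inv[OF assms(1)] adj_inner[OF assms(2)])
    also have "\<dots> = inner x (U (adj S (inv U y)))"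
      using unitary_inner[OF assms(1), of "inv U x"] by (simp add: unitary_op_inverse[OF assms(1)])
    finally show "inner (T x) y = inner x (U (adj S (inv U y)))" .
  qed
  then show ?thesis by (simp add: unitary_op_inverse[OF assms(1)])
qed

lemma defect_op_intertwine:
  fixes U :: "'a::complex_hilbert \<Rightarrow> 'b::complex_hilbert"
  assumes "unitary_op U" "bounded_clinear_op P1" "bounded_clinear_op P2"
    and contraction: "\<And>x. norm (P1 x) \<le> norm x" and "U \<circ> P1 = P2 \<circ> U"
  shows "U \<circ> defect_op P1 = defect_op P2 \<circ> U"
proof -
  note U_inv = unitary_op_inverse[OF assms(1)]
  have U_norm: "norm (U x) = norm x" for x using assms(1) by (simp add: unitary_op_def)
  have U_linear: "bounded_linear U" using assms(1) by (simp add: unitary_op_def bounded_clinear_op_def)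
  have P2: "P2 y = U (P1 (inv U y))" for y using fun_cong[OF assms(5), of "inv U y"] by (simp add: U_inv)
  have "norm (P2 y) \<le> norm y" for y
    using contraction[of "inv U y"] U_norm[of "inv U y"] by (simp add: P2 U_norm U_inv)
  note defect2 = positive_sqrt_iff_defect_op[OF assms(3) this]
  have "defect_op P1 \<circ> defect_op P1 = (\<lambda>x. x - adj P1 (P1 x))"
    using positive_sqrt_iff_defect_op[OF assms(2) contraction] by blast
  then have "U (defect_op P1 (defect_op P1 (inv U y))) = y - adj P2 (P2 y)" for y
    using fun_cong[OF assms(5)] adj_intertwine[OF assms(1) _ _ assms(5)] assms(2,3)
    by (simp add: fun_eq_iff linear_simps[OF U_linear] U_inv P2 bounded_clinear_op_def)
  moreover have "positive_op (\<lambda>y. U (defect_op P1 (inv U y)))"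
    by (intro positive_op_unitary_conj assms(1))
      (use positive_sqrt_iff_defect_op[OF assms(2) contraction] in blast)
  ultimately have conj: "(\<lambda>y. U (defect_op P1 (inv U y))) = defect_op P2"
    by (simp add: defect2[symmetric] comp_def U_inv)
  show ?thesis
  proof
    show "(U \<circ> defect_op P1) x = (defect_op P2 \<circ> U) x" for x
      using fun_cong[OF conj, of "U x"] by (simp add: U_inv)
  qed
qed

lemma closure_range_intertwine:
  assumes "unitary_op (U :: 'a::complex_hilbert \<Rightarrow> 'b::complex_hilbert)" and "U \<circ> D1 = D2 \<circ> U"
  shows "closure (range D2) = U ` closure (range D1)"
proof -
  have "surj U" using assms(1) by (simp add: unitary_op_def bij_is_surj)
  then have "range D2 = U ` range D1" by (metis assms(2) image_comp)
  then show ?thesis by (simp add: closure_unitary_image[OF assms(1)])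
qed

lemma closure_range_diff:
  assumes "bounded_linear D" "a \<in> closure (range D)" "b \<in> closure (range D)"
  shows "a - b \<in> closure (range D)"
proof -
  obtain xa xb where "\<And>n. xa n \<in> range D" "xa \<longlonglongrightarrow> a" "\<And>n. xb n \<in> range D" "xb \<longlonglongrightarrow> b"
    using assms(2,3) unfolding closure_sequential by blast
  moreover have "u - v \<in> range D" if "u \<in> range D" "v \<in> range D" for u v
    using that by (auto simp: linear_simps[OF assms(1)] simp flip: linear_simps(2)[OF assms(1)])
  ultimately show ?thesis
    unfolding closure_sequential by (intro exI[of _ "\<lambda>n. xa n - xb n"]) (auto intro: tendsto_diff)
qed

lemma closure_range_selfadjoint_kernel:
  assumes "\<And>x y. inner (D x) y = inner x (D y)" "w \<in> closure (range D)" "D w = 0"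
  shows "w = 0"
proof -
  have "range D \<subseteq> {v. inner w v = 0}" using assms(1,3) by (auto simp flip: assms(1))
  then have "closure (range D) \<subseteq> {v. inner w v = 0}" by (rule closure_minimal) (rule closed_hyperplane)
  then show ?thesis using assms(2) by auto
qed

text \<open>A bounded additive \<open>H\<close> on \<open>closure (range D)\<close> is determined by its sandwich \<open>D H D\<close>:
  \<open>H\<close> vanishes on \<open>range D\<close> because \<open>D (H (D x)) = 0\<close>, hence everywhere by boundedness.\<close>

lemma sandwich_eq_0_imp_eq_0:
  fixes D H :: "'a::complex_hilbert \<Rightarrow> 'a"
  assumes bl: "bounded_linear D" and selfadjoint: "\<And>x y. inner (D x) y = inner x (D y)"
    and maps: "\<And>y. y \<in> closure (range D) \<Longrightarrow> H y \<in> closure (range D)"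
    and add: "\<And>a b. a \<in> closure (range D) \<Longrightarrow> b \<in> closure (range D) \<Longrightarrow> H (a + b) = H a + H b"
    and bound: "\<And>y. y \<in> closure (range D) \<Longrightarrow> norm (H y) \<le> K * norm y"
    and sandwich: "\<And>x. D (H (D x)) = 0"
    and y: "y \<in> closure (range D)"
  shows "H y = 0"
proof -
  have range_closure: "D x \<in> closure (range D)" for x by (simp add: closure_subset[THEN subsetD])
  have H_range: "H (D x) = 0" for x
    by (rule closure_range_selfadjoint_kernel[OF selfadjoint maps[OF range_closure] sandwich])
  obtain xs where xs: "\<And>n. xs n \<in> range D" "xs \<longlonglongrightarrow> y"
    using y unfolding closure_sequential by blast
  have "norm (H y) \<le> K * norm (y - xs n)" for n
  proof -
    obtain u where u: "xs n = D u" using xs(1)[of n] by blast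
    have diff: "y - D u \<in> closure (range D)" by (rule closure_range_diff[OF bl y range_closure])
    then have "H y = H (y - D u)" using add[OF diff range_closure, of u] by (simp add: H_range)
    then show ?thesis using bound[OF diff] u by simp
  qed
  moreover have "(\<lambda>n. K * norm (y - xs n)) \<longlonglongrightarrow> K * norm (y - y)"
    by (intro tendsto_intros xs(2))
  ultimately have "norm (H y) \<le> K * norm (y - y)" by (intro LIMSEQ_le_const) auto
  then show ?thesis by simp
qed

lemma unitary_between_image:
  assumes "unitary_op (U :: 'a::complex_hilbert \<Rightarrow> 'b::complex_hilbert)"
  shows "unitary_between S (U ` S) U"
proof -
  have U: "bounded_linear U" "\<And>c x. U (scaleC c x) = scaleC c (U x)" "\<And>x. norm (U x) = norm x" "inj U"
    using assms by (simp_all add: unitary_op_def bounded_clinear_op_def bij_is_inj)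
  have "inj_on U S" using \<open>inj U\<close> by (rule inj_on_subset) simp
  then have "bij_betw U S (U ` S)" by (simp add: bij_betw_def)
  moreover have "\<exists>K. \<forall>x\<in>S. norm (U x) \<le> K * norm x" using U(3) by (intro exI[of _ 1]) simp
  ultimately show ?thesis
    using U by (simp add: unitary_between_def bounded_clinear_on_def linear_simps)
qed

lemma inv_into_unitary_image:
  assumes "unitary_op U" and "y \<in> U ` S"
  shows "inv_into S U y = inv U y"
proof -
  obtain x where "x \<in> S" "y = U x" using assms(2) by blast
  moreover have "inj U" using assms(1) by (simp add: unitary_op_def bij_is_inj)
  ultimately show ?thesis
    by (simp add: inv_into_f_f inj_on_subset unitary_op_inverse[OF assms(1)])
qed

lemma fundamental_identity_intertwine:
  fixes U :: "'a::complex_hilbert \<Rightarrow> 'b::complex_hilbert"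
  assumes "unitary_op U" "bounded_linear S2" "bounded_linear T2"
    and "U \<circ> S1 = T1 \<circ> U" "U \<circ> S2 = T2 \<circ> U" "U \<circ> P = Q \<circ> U"
  shows "U (S1 x - adj S2 (P x)) = T1 (U x) - adj T2 (Q (U x))"
proof -
  have "bounded_linear U" using assms(1) by (simp add: unitary_op_def bounded_clinear_op_def)
  then show ?thesis
    using fun_cong[OF assms(4)] fun_cong[OF assms(6)] adj_intertwine[OF assms(1,2,3,5)]
    by (simp add: linear_simps)
qed

lemma fundamental_op_intertwine:
  fixes U :: "'a::complex_hilbert \<Rightarrow> 'b::complex_hilbert"
  assumes U: "unitary_op U" and D: "U \<circ> D1 = D2 \<circ> U" and "positive_op D2"
    and F: "F ` closure (range D1) \<subseteq> closure (range D1)" "bounded_clinear_on (closure (range D1)) F"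
    and G: "G ` closure (range D2) \<subseteq> closure (range D2)" "bounded_clinear_on (closure (range D2)) G"
    and sandwich: "\<And>x. U (D1 (F (D1 x))) = D2 (G (D2 (U x)))"
    and y: "y \<in> closure (range D2)"
  shows "U (F (inv U y)) = G y"
proof -
  note U_inv = unitary_op_inverse[OF U]
  have U_lin: "bounded_linear U" "bounded_linear (inv U)" and U_norm: "\<And>x. norm (inv U x) = norm x"
    using U unitary_inv[OF U] by (simp_all add: unitary_op_def bounded_clinear_op_def)
  have D2: "bounded_linear D2" "\<And>x y. inner (D2 x) y = inner x (D2 y)"
    using assms(3) adj_inner[of D2] by (simp_all add: positive_op_def bounded_clinear_op_def)
  have ranges: "closure (range D2) = U ` closure (range D1)"
    by (rule closure_range_intertwine[OF U D])
  then have inv_U_range: "inv U z \<in> closure (range D1)" if "z \<in> closure (range D2)" for z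
    using that by (auto simp: U_inv)
  obtain KF KG where KF: "\<And>x. x \<in> closure (range D1) \<Longrightarrow> norm (F x) \<le> KF * norm x"
    and KG: "\<And>x. x \<in> closure (range D2) \<Longrightarrow> norm (G x) \<le> KG * norm x"
    using F(2) G(2) unfolding bounded_clinear_on_def by metis
  define H where "H z = G z - U (F (inv U z))" for z
  have "H y = 0"
  proof (rule sandwich_eq_0_imp_eq_0[OF D2 _ _ _ _ y, where K = "KG + KF"])
    show "H z \<in> closure (range D2)" if "z \<in> closure (range D2)" for z
      unfolding H_def using that F(1) G(1) inv_U_range ranges
      by (intro closure_range_diff[OF D2(1)]) (auto simp: U_inv)
    show "H (a + b) = H a + H b" if "a \<in> closure (range D2)" "b \<in> closure (range D2)" for a b
      using that inv_U_range F(2) G(2)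
      by (simp add: H_def bounded_clinear_on_def linear_simps[OF U_lin(1)] linear_simps[OF U_lin(2)])
    show "norm (H z) \<le> (KG + KF) * norm z" if "z \<in> closure (range D2)" for z
      using norm_triangle_ineq4[of "G z" "U (F (inv U z))"] KG[OF that] KF[OF inv_U_range[OF that]]
        U U_norm[of z]
      by (simp add: H_def unitary_op_def distrib_right)
    have "inv U (D2 x) = D1 (inv U x)" for x
      using arg_cong[OF fun_cong[OF D, of "inv U x"], of "inv U"] by (simp add: U_inv)
    moreover have "D2 (U z) = U (D1 z)" for z using fun_cong[OF D, of z] by simp
    ultimately show "D2 (H (D2 x)) = 0" for x
      using sandwich[of "inv U x"] by (simp add: H_def linear_simps[OF D2(1)] U_inv)
  qed
  then show ?thesis by (simp add: H_def)
qed

theorem proposition4p12: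
  fixes S11 S12 P1 F1 F2 :: "'a::complex_hilbert \<Rightarrow> 'a"
    and S21 S22 P2 G1 G2 :: "'b::complex_hilbert \<Rightarrow> 'b"
    and U :: "'a \<Rightarrow> 'b"
  assumes "gamma3_contraction S11 S12 P1"
    and "gamma3_contraction S21 S22 P2"
    and "fundamental_pair S11 S12 P1 F1 F2"
    and "fundamental_pair S21 S22 P2 G1 G2"
    and "unitary_op U"
    and "U \<circ> S11 = S21 \<circ> U" and "U \<circ> S12 = S22 \<circ> U" and "U \<circ> P1 = P2 \<circ> U"
  shows "\<exists>V :: 'a \<Rightarrow> 'b. unitary_between (defect_space P1) (defect_space P2) V \<and>
           (\<forall>y\<in>defect_space P2. V (F1 (inv_into (defect_space P1) V y)) = G1 y) \<and>
           (\<forall>y\<in>defect_space P2. V (F2 (inv_into (defect_space P1) V y)) = G2 y)"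
proof -
  have ops: "bounded_clinear_op S11" "bounded_clinear_op S12" "bounded_clinear_op P1"
      "bounded_clinear_op S21" "bounded_clinear_op S22" "bounded_clinear_op P2"
    using assms(1,2) by (simp_all add: gamma3_contraction_def commuting_triple_def)
  then have lin: "bounded_linear S11" "bounded_linear S12" "bounded_linear S21" "bounded_linear S22"
    by (simp_all add: bounded_clinear_op_def)
  note contraction = gamma3_contraction_norm_le[OF assms(1)] gamma3_contraction_norm_le[OF assms(2)]
  have D: "U \<circ> defect_op P1 = defect_op P2 \<circ> U"
    by (rule defect_op_intertwine[OF assms(5) ops(3,6) contraction(1) assms(8)])
  have "positive_op (defect_op P2)"
    using positive_sqrt_iff_defect_op[OF ops(6) contraction(2)] by blast
  note intertwine = fundamental_op_intertwine[OF assms(5) D this]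
  have DS: "defect_space P2 = U ` defect_space P1"
    unfolding defect_space_def by (rule closure_range_intertwine[OF assms(5) D])
  note F = assms(3)[unfolded fundamental_pair_def defect_space_def]
  note G = assms(4)[unfolded fundamental_pair_def defect_space_def]
  have "U (F1 (inv U y)) = G1 y" if "y \<in> defect_space P2" for y
  proof (rule intertwine[where F = F1 and G = G1])
    show "U (defect_op P1 (F1 (defect_op P1 x))) = defect_op P2 (G1 (defect_op P2 (U x)))" for x
      using fundamental_identity_intertwine[OF assms(5) lin(2,4) assms(6,7,8), of x] F G by simp
  qed (use F G that in \<open>simp_all add: defect_space_def\<close>)
  moreover have "U (F2 (inv U y)) = G2 y" if "y \<in> defect_space P2" for y
  proof (rule intertwine[where F = F2 and G = G2])
    show "U (defect_op P1 (F2 (defect_op P1 x))) = defect_op P2 (G2 (defect_op P2 (U x)))" for x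
      using fundamental_identity_intertwine[OF assms(5) lin(1,3) assms(7,6,8), of x] F G by simp
  qed (use F G that in \<open>simp_all add: defect_space_def\<close>)
  ultimately show ?thesis
    using inv_into_unitary_image[OF assms(5)] unitary_between_image[OF assms(5)]
    by (intro exI[of _ U]) (simp add: DS)
qed

end
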